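(* Let $c,d>0$ with $\frac1c+\frac1d\ge 1$. For $r\in(0,1)$ and $p>0$ define $$\omega(c,d,p,r)=\left(\frac{r^p}{1+r^p}\,F\!\left(c,d;c+d;\frac{r^p}{1+r^p}\right)\right)^{1/p}.$$ Then for each fixed $r\in(0,1)$, $p\mapsto\omega(c,d,p,r)$ is increasing on $(0,\infty)$. In particular, for all $r\in(0,1)$, $$\frac{\sqrt r}{1+\sqrt r}\,F\!\left(c,d;c+d;\frac{\sqrt r}{1+\sqrt r}\right)\le\left(\frac{r}{1+r}\,F\!\left(c,d;c+d;\frac{r}{1+r}\right)\right)^{1/2}.$$
   Context: $F(a,b;c;x)={}_2F_1(a,b;c;x)=\sum_{n\ge0}\frac{(a)_n(b)_n}{(c)_n}\frac{x^n}{n!}$ for $|x|<1$ is the Gaussian hypergeometric function, where $(a)_0=1$, $(a)_n=a(a+1)\cdots(a+n-1)$. *)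

theory Defs
  imports "HOL-Analysis.Analysis"
begin

definition hyp2F1 :: "real \<Rightarrow> real \<Rightarrow> real \<Rightarrow> real \<Rightarrow> real" where
  "hyp2F1 a b c x = (\<Sum>n. pochhammer a n * pochhammer b n / pochhammer c n * x ^ n / fact n)"

definition omega :: "real \<Rightarrow> real \<Rightarrow> real \<Rightarrow> real \<Rightarrow> real" where
  "omega c d p r = ((r powr p / (1 + r powr p)) * hyp2F1 c d (c + d) (r powr p / (1 + r powr p))) powr (1 / p)"

end

theory Submission
  imports Defs
begin

(* Write F(t) = sum_n A_n t^n with A_n = (c)_n (d)_n / ((c+d)_n n!).
   Since A_(n+1)/A_n = (c+n)(d+n)/((c+d+n)(n+1)), the hypothesis 1/c + 1/d >= 1,
   i.e. c d <= c + d, makes the coefficients nonincreasing, with A_0 = 1.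
   For any nonnegative nonincreasing coefficient sequence the "defect"
   (1 - t) sum_n a_n t^n = a_0 + sum_n (a_(n+1) - a_n) t^(n+1) is nonincreasing
   on [0,1) and positive.  With u = r^p and t = u/(1+u) (so 1 - t = 1/(1+u)),
   the quantity inside omega equals u * Q(u), where Q(u) = F(u/(1+u))/(1+u) lies in
   (0,1] and is nonincreasing in u.  Hence omega(c,d,p,r) = r * Q(r^p)^(1/p).
   As p grows, r^p decreases (so Q(r^p) grows) and the exponent 1/p decreases
   on a base <= 1, so omega increases.  The displayed inequality is the instance
   omega(c,d,1/2,r) <= omega(c,d,1,r). *)

lemma summable_bounded_power_series:
  fixes a :: "nat \<Rightarrow> real"
  assumes bound: "\<And>n. \<bar>a n\<bar> \<le> B" and t: "0 \<le> t" "t < 1"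
  shows "summable (\<lambda>n. a n * t ^ n)"
proof (rule summable_comparison_test'[where g = "\<lambda>n. B * t ^ n" and N = 0])
  show "summable (\<lambda>n. B * t ^ n)"
    using t by (intro summable_mult summable_geometric) auto
  fix n :: nat
  show "norm (a n * t ^ n) \<le> B * t ^ n"
    using bound[of n] t by (simp add: abs_mult mult_right_mono)
qed

lemma summable_decseq_power_series:
  fixes a :: "nat \<Rightarrow> real"
  assumes "decseq a" "\<And>n. a n \<ge> 0" "0 \<le> t" "t < 1"
  shows "summable (\<lambda>n. a n * t ^ n)"
  using assms by (intro summable_bounded_power_series[of a "a 0"]) (auto simp: decseq_def)

lemma one_minus_times_power_series:
  fixes a :: "nat \<Rightarrow> real"
  assumes s: "summable (\<lambda>n. a n * t ^ n)"
  shows "summable (\<lambda>n. (a (Suc n) - a n) * t ^ Suc n)"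
    and "(1 - t) * (\<Sum>n. a n * t ^ n) = a 0 + (\<Sum>n. (a (Suc n) - a n) * t ^ Suc n)"
proof -
  have s1: "summable (\<lambda>n. a (Suc n) * t ^ Suc n)"
    using s summable_Suc_iff[of "\<lambda>n. a n * t ^ n"] by simp
  have s2: "summable (\<lambda>n. a n * t ^ Suc n)"
    using summable_mult[OF s, of t] by (simp add: algebra_simps)
  show "summable (\<lambda>n. (a (Suc n) - a n) * t ^ Suc n)"
    using summable_diff[OF s1 s2] by (simp add: algebra_simps)
  have shift: "(\<Sum>n. a (Suc n) * t ^ Suc n) = (\<Sum>n. a n * t ^ n) - a 0"
    using suminf_split_head[OF s] by simp
  have times_t: "(\<Sum>n. a n * t ^ Suc n) = t * (\<Sum>n. a n * t ^ n)"
    using suminf_mult[OF s, of t] by (simp add: algebra_simps)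
  have "(\<Sum>n. (a (Suc n) - a n) * t ^ Suc n)
      = (\<Sum>n. a (Suc n) * t ^ Suc n) - (\<Sum>n. a n * t ^ Suc n)"
    using suminf_diff[OF s1 s2] by (simp add: algebra_simps)
  then show "(1 - t) * (\<Sum>n. a n * t ^ n) = a 0 + (\<Sum>n. (a (Suc n) - a n) * t ^ Suc n)"
    using shift times_t by (simp add: algebra_simps)
qed

text \<open>For nonincreasing coefficients all differences are \<open>\<le> 0\<close>, so
  \<open>(1 - t) \<Sum> a\<^sub>n t\<^sup>n\<close> is nonincreasing in \<open>t \<in> [0,1)\<close>.\<close>
lemma decseq_power_series_defect_antitone:
  fixes a :: "nat \<Rightarrow> real"
  assumes dec: "decseq a" and nonneg: "\<And>n. a n \<ge> 0" and st: "0 \<le> s" "s \<le> t" "t < 1"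
  shows "(1 - t) * (\<Sum>n. a n * t ^ n) \<le> (1 - s) * (\<Sum>n. a n * s ^ n)"
proof -
  have sum_t: "summable (\<lambda>n. a n * t ^ n)" and sum_s: "summable (\<lambda>n. a n * s ^ n)"
    using st by (auto intro!: summable_decseq_power_series[OF dec nonneg])
  have "(\<Sum>n. (a (Suc n) - a n) * t ^ Suc n) \<le> (\<Sum>n. (a (Suc n) - a n) * s ^ Suc n)"
  proof (rule suminf_le)
    fix n
    have "s ^ Suc n \<le> t ^ Suc n" using st by (intro power_mono) auto
    moreover have "a (Suc n) \<le> a n" using dec by (simp add: decseq_Suc_iff)
    ultimately show "(a (Suc n) - a n) * t ^ Suc n \<le> (a (Suc n) - a n) * s ^ Suc n"
      by (intro mult_left_mono_neg) auto
  qed (use one_minus_times_power_series(1) sum_t sum_s in auto)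
  then show ?thesis
    using one_minus_times_power_series(2)[OF sum_t] one_minus_times_power_series(2)[OF sum_s]
    by simp
qed

lemma power_series_defect_pos:
  fixes a :: "nat \<Rightarrow> real"
  assumes s: "summable (\<lambda>n. a n * t ^ n)" and nonneg: "\<And>n. a n \<ge> 0"
    and a0: "a 0 > 0" and t: "0 \<le> t" "t < 1"
  shows "(1 - t) * (\<Sum>n. a n * t ^ n) > 0"
proof -
  have "a 0 \<le> (\<Sum>n. a n * t ^ n)"
    using sum_le_suminf[OF s, of "{0}"] nonneg t by simp
  then show ?thesis using a0 t by simp
qed

definition hyp2F1_coeff :: "real \<Rightarrow> real \<Rightarrow> nat \<Rightarrow> real" where
  "hyp2F1_coeff c d n = pochhammer c n * pochhammer d n / pochhammer (c + d) n / fact n"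

lemma hyp2F1_balanced_series: "hyp2F1 c d (c + d) t = (\<Sum>n. hyp2F1_coeff c d n * t ^ n)"
  unfolding hyp2F1_def hyp2F1_coeff_def by simp

lemma hyp2F1_coeff_0 [simp]: "hyp2F1_coeff c d 0 = 1"
  by (simp add: hyp2F1_coeff_def)

lemma hyp2F1_coeff_nonneg: "c > 0 \<Longrightarrow> d > 0 \<Longrightarrow> hyp2F1_coeff c d n \<ge> 0"
  unfolding hyp2F1_coeff_def by (intro divide_nonneg_nonneg mult_nonneg_nonneg pochhammer_nonneg) auto

lemma hyp2F1_coeff_Suc:
  assumes c: "c > 0" and d: "d > 0"
  shows "hyp2F1_coeff c d (Suc n)
    = hyp2F1_coeff c d n * ((c + n) * (d + n) / ((c + d + n) * (n + 1)))"
proof -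
  have "pochhammer (c + d) n > 0" using c d by (intro pochhammer_pos) auto
  moreover have "c + d + n > 0" using c d by simp
  ultimately show ?thesis
    unfolding hyp2F1_coeff_def by (simp add: pochhammer_Suc fact_Suc field_simps)
qed

text \<open>The ratio is \<open>\<le> 1\<close> exactly when \<open>cd \<le> c + d\<close>, uniformly in \<open>n\<close>.\<close>
lemma hyp2F1_coeff_decseq:
  assumes c: "c > 0" and d: "d > 0" and cd: "c * d \<le> c + d"
  shows "decseq (hyp2F1_coeff c d)"
proof (rule decseq_SucI)
  fix n :: nat
  have "c * d \<le> c + d + n" using cd of_nat_0_le_iff[of n] by linarith
  then have "(c + n) * (d + n) \<le> (c + d + n) * (n + 1)"
    by (simp add: algebra_simps)
  then have "(c + n) * (d + n) / ((c + d + n) * (n + 1)) \<le> 1"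
    using c d by simp
  then have "hyp2F1_coeff c d n * ((c + n) * (d + n) / ((c + d + n) * (n + 1)))
      \<le> hyp2F1_coeff c d n"
    using hyp2F1_coeff_nonneg[OF c d, of n] by (rule mult_left_le)
  then show "hyp2F1_coeff c d (Suc n) \<le> hyp2F1_coeff c d n"
    by (simp only: hyp2F1_coeff_Suc[OF c d])
qed

definition hyp2F1_reduced :: "real \<Rightarrow> real \<Rightarrow> real \<Rightarrow> real" where
  "hyp2F1_reduced c d u = hyp2F1 c d (c + d) (u / (1 + u)) / (1 + u)"

text \<open>Since \<open>1 - u/(1+u) = 1/(1+u)\<close>, \<open>Q\<close> is the defect of the hypergeometric series.\<close>
lemma hyp2F1_reduced_defect:
  assumes "u \<ge> 0"
  shows "hyp2F1_reduced c d u
    = (1 - u / (1 + u)) * (\<Sum>n. hyp2F1_coeff c d n * (u / (1 + u)) ^ n)"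
proof -
  have "1 - u / (1 + u) = 1 / (1 + u)" using assms by (simp add: field_simps)
  then show ?thesis unfolding hyp2F1_reduced_def hyp2F1_balanced_series by simp
qed

lemma hyp2F1_reduced_scaled:
  "u / (1 + u) * hyp2F1 c d (c + d) (u / (1 + u)) = u * hyp2F1_reduced c d u"
  unfolding hyp2F1_reduced_def by simp

context
  fixes c d :: real
  assumes c: "c > 0" and d: "d > 0" and cd: "c * d \<le> c + d"
begin

lemma hyp2F1_reduced_antitone:
  assumes "0 \<le> u" "u \<le> v"
  shows "hyp2F1_reduced c d v \<le> hyp2F1_reduced c d u"
proof -
  have "u / (1 + u) \<le> v / (1 + v)" using assms by (simp add: divide_simps algebra_simps)
  moreover have "v / (1 + v) < 1" "0 \<le> u / (1 + u)" using assms by auto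
  ultimately show ?thesis
    using assms hyp2F1_coeff_decseq[OF c d cd] hyp2F1_coeff_nonneg[OF c d]
    by (simp add: hyp2F1_reduced_defect decseq_power_series_defect_antitone)
qed

lemma hyp2F1_reduced_pos:
  assumes "u \<ge> 0"
  shows "hyp2F1_reduced c d u > 0"
proof -
  have t: "0 \<le> u / (1 + u)" "u / (1 + u) < 1" using assms by auto
  have "summable (\<lambda>n. hyp2F1_coeff c d n * (u / (1 + u)) ^ n)"
    using summable_decseq_power_series[OF hyp2F1_coeff_decseq[OF c d cd]
        hyp2F1_coeff_nonneg[OF c d] t] .
  from power_series_defect_pos[OF this hyp2F1_coeff_nonneg[OF c d] _ t]
  show ?thesis using assms by (simp add: hyp2F1_reduced_defect)
qed

lemma hyp2F1_reduced_le_1: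
  assumes "u \<ge> 0"
  shows "hyp2F1_reduced c d u \<le> 1"
  using hyp2F1_reduced_antitone[of 0 u] assms
  by (simp add: hyp2F1_reduced_def hyp2F1_balanced_series)

lemma omega_factor:
  assumes r: "r > 0" and p: "p > 0"
  shows "omega c d p r = r * hyp2F1_reduced c d (r powr p) powr (1 / p)"
proof -
  let ?u = "r powr p"
  have "omega c d p r = (?u * hyp2F1_reduced c d ?u) powr (1 / p)"
    by (simp only: omega_def hyp2F1_reduced_scaled)
  also have "\<dots> = ?u powr (1 / p) * hyp2F1_reduced c d ?u powr (1 / p)"
    using hyp2F1_reduced_pos[of ?u] by (simp add: powr_mult)
  also have "?u powr (1 / p) = r" using r p by (simp add: powr_powr)
  finally show ?thesis .
qed

end

text \<open>If \<open>g\<close> maps \<open>[0,\<infinity>)\<close> antitonically into \<open>(0,1]\<close> and \<open>0 < r < 1\<close>, then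
  \<open>p \<mapsto> g(r^p)^(1/p)\<close> increases: both the base grows and the exponent shrinks on a base \<open>\<le> 1\<close>.\<close>
lemma mono_on_powr_inverse_exponent:
  fixes g :: "real \<Rightarrow> real"
  assumes r: "0 < r" "r < 1"
    and g_pos: "\<And>u. u \<ge> 0 \<Longrightarrow> g u > 0" and g_le_1: "\<And>u. u \<ge> 0 \<Longrightarrow> g u \<le> 1"
    and g_antitone: "\<And>u v. 0 \<le> u \<Longrightarrow> u \<le> v \<Longrightarrow> g v \<le> g u"
  shows "mono_on {0<..} (\<lambda>p. g (r powr p) powr (1 / p))"
proof (rule mono_onI)
  fix p q :: real
  assume "p \<in> {0<..}" "q \<in> {0<..}" and pq: "p \<le> q"
  then have p: "p > 0" and q: "q > 0" by auto
  have base: "0 < g (r powr p)" "g (r powr p) \<le> 1" using g_pos g_le_1 by auto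
  have "g (r powr p) powr (1 / p) \<le> g (r powr p) powr (1 / q)"
    using base p q pq by (intro powr_mono') (auto simp: divide_simps)
  also have "\<dots> \<le> g (r powr q) powr (1 / q)"
    using base q r pq g_antitone[of "r powr q" "r powr p"] powr_mono'[of p q r]
    by (intro powr_mono2) auto
  finally show "g (r powr p) powr (1 / p) \<le> g (r powr q) powr (1 / q)" .
qed

lemma omega_mono:
  assumes c: "c > 0" and d: "d > 0" and cd: "c * d \<le> c + d" and r: "0 < r" "r < 1"
  shows "mono_on {0<..} (\<lambda>p. omega c d p r)"
proof (rule mono_onI)
  fix p q :: real
  assume pq: "p \<in> {0<..}" "q \<in> {0<..}" "p \<le> q"
  have "hyp2F1_reduced c d (r powr p) powr (1 / p) \<le> hyp2F1_reduced c d (r powr q) powr (1 / q)"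
    using mono_onD[OF mono_on_powr_inverse_exponent[OF r] pq]
      hyp2F1_reduced_pos[OF c d cd] hyp2F1_reduced_le_1[OF c d cd]
      hyp2F1_reduced_antitone[OF c d cd] by blast
  then show "omega c d p r \<le> omega c d q r"
    using pq r by (simp add: omega_factor[OF c d cd])
qed

lemma reciprocal_sum_ge_1_iff:
  fixes c d :: real
  assumes "c > 0" "d > 0"
  shows "1 / c + 1 / d \<ge> 1 \<longleftrightarrow> c * d \<le> c + d"
  using assms by (simp add: field_simps)

lemma le_powr_half_of_square_le:
  fixes x y :: real
  assumes "x \<ge> 0" "x ^ 2 \<le> y"
  shows "x \<le> y powr (1 / 2)"
proof -
  have "y \<ge> 0" using assms(2) zero_le_power2[of x] by linarith
  then show ?thesis using assms real_le_rsqrt[of x y] by (simp add: powr_half_sqrt)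
qed

theorem mainTheorem3:
  fixes c d :: real
  assumes "c > 0" and "d > 0" and "1 / c + 1 / d \<ge> 1"
  shows "(\<forall>r. 0 < r \<and> r < 1 \<longrightarrow> mono_on {0<..} (\<lambda>p. omega c d p r))
    \<and> (\<forall>r. 0 < r \<and> r < 1 \<longrightarrow>
        sqrt r / (1 + sqrt r) * hyp2F1 c d (c + d) (sqrt r / (1 + sqrt r))
        \<le> (r / (1 + r) * hyp2F1 c d (c + d) (r / (1 + r))) powr (1 / 2))"
proof -
  have c: "c > 0" and d: "d > 0" using assms by auto
  have cd: "c * d \<le> c + d" using assms reciprocal_sum_ge_1_iff by blast
  have half_vs_one: "sqrt r / (1 + sqrt r) * hyp2F1 c d (c + d) (sqrt r / (1 + sqrt r))
        \<le> (r / (1 + r) * hyp2F1 c d (c + d) (r / (1 + r))) powr (1 / 2)"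
    if r: "0 < r" "r < 1" for r
  proof -
    let ?X = "sqrt r / (1 + sqrt r) * hyp2F1 c d (c + d) (sqrt r / (1 + sqrt r))"
    let ?Y = "r / (1 + r) * hyp2F1 c d (c + d) (r / (1 + r))"
    have X: "?X \<ge> 0"
      using r hyp2F1_reduced_pos[OF c d cd, of "sqrt r"]
      by (subst hyp2F1_reduced_scaled) auto
    have Y: "?Y \<ge> 0"
      using r hyp2F1_reduced_pos[OF c d cd, of r]
      by (subst hyp2F1_reduced_scaled) auto
    have "omega c d (1 / 2) r \<le> omega c d 1 r"
      using mono_onD[OF omega_mono[OF c d cd r]] by simp
    then have "?X ^ 2 \<le> ?Y"
      using X Y r by (simp add: omega_def powr_half_sqrt powr_numeral)
    then show ?thesis by (rule le_powr_half_of_square_le[OF X])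
  qed
  show ?thesis using omega_mono[OF c d cd] half_vs_one by blast
qed

end
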